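(* For any positive integer $k$ and integers $n_1,\dots,n_k>1$, \[\mathrm{mur}\Big(\bigcup_{i=1}^k K_{n_i}\Big)=\mathrm{mur}(K_{n_1,\dots,n_k})=k-1,\] where $\bigcup_{i=1}^k K_{n_i}$ is the vertex-disjoint union of complete graphs on $n_1,\dots,n_k$ vertices and $K_{n_1,\dots,n_k}$ is the complete multipartite graph with parts of sizes $n_1,\dots,n_k$.
   Context: For a finite simple undirected graph $G$ on vertices $v_1,\dots,v_n$, let $A_G$ be its $(0,1)$-adjacency matrix, $D_G=\mathrm{diag}(d_1,\dots,d_n)$ with $d_i$ the degree of $v_i$, $I$ the $n\times n$ identity matrix and $J$ the $n\times n$ all-ones matrix. A universal adjacency matrix of $G$ is any matrix $\alpha A_G+\beta I+\gamma J+\delta D_G$ with real scalars $\alpha,\beta,\gamma,\delta$ and $\alpha\neq 0$. The minimum universal rank $\mathrm{mur}(G)$ is the minimum rank over all universal adjacency matrices of $G$. *)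

theory Defs
  imports Main "Jordan_Normal_Form.DL_Rank"
begin

text \<open>A finite simple graph on vertices 0, ..., N-1 is given by its vertex count N and an
  adjacency predicate adj (assumed symmetric and irreflexive on the vertex set).\<close>

definition adj_mat :: "nat \<Rightarrow> (nat \<Rightarrow> nat \<Rightarrow> bool) \<Rightarrow> real mat" where
  "adj_mat N adj = mat N N (\<lambda>(i,j). if adj i j then 1 else 0)"

definition degree :: "nat \<Rightarrow> (nat \<Rightarrow> nat \<Rightarrow> bool) \<Rightarrow> nat \<Rightarrow> nat" where
  "degree N adj i = card {j. j < N \<and> adj i j}"

definition deg_mat :: "nat \<Rightarrow> (nat \<Rightarrow> nat \<Rightarrow> bool) \<Rightarrow> real mat" where
  "deg_mat N adj = mat N N (\<lambda>(i,j). if i = j then real (degree N adj i) else 0)"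

definition all_ones_mat :: "nat \<Rightarrow> real mat" where
  "all_ones_mat N = mat N N (\<lambda>_. 1)"

definition univ_adj_mat ::
  "nat \<Rightarrow> (nat \<Rightarrow> nat \<Rightarrow> bool) \<Rightarrow> real \<Rightarrow> real \<Rightarrow> real \<Rightarrow> real \<Rightarrow> real mat" where
  "univ_adj_mat N adj \<alpha> \<beta> \<gamma> \<delta> =
     \<alpha> \<cdot>\<^sub>m adj_mat N adj + \<beta> \<cdot>\<^sub>m 1\<^sub>m N + \<gamma> \<cdot>\<^sub>m all_ones_mat N + \<delta> \<cdot>\<^sub>m deg_mat N adj"

definition mur :: "nat \<Rightarrow> (nat \<Rightarrow> nat \<Rightarrow> bool) \<Rightarrow> nat" where
  "mur N adj = Min {vec_space.rank N (univ_adj_mat N adj \<alpha> \<beta> \<gamma> \<delta>) | \<alpha> \<beta> \<gamma> \<delta>. \<alpha> \<noteq> 0}"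

text \<open>Given part sizes ns = [n_1,...,n_k], vertices 0..<sum ns are split into consecutive
  blocks; part_of ns v is the index of the block containing v.\<close>
definition part_of :: "nat list \<Rightarrow> nat \<Rightarrow> nat" where
  "part_of ns v = (LEAST i. v < sum_list (take (Suc i) ns))"

definition union_complete :: "nat list \<Rightarrow> nat \<Rightarrow> nat \<Rightarrow> bool" where
  "union_complete ns v w = (v \<noteq> w \<and> part_of ns v = part_of ns w)"

definition complete_multipartite :: "nat list \<Rightarrow> nat \<Rightarrow> nat \<Rightarrow> bool" where
  "complete_multipartite ns v w = (part_of ns v \<noteq> part_of ns w)"

end

theory Submission
  imports Defs
begin

text \<open>Let k be the number of parts. Upper bound: for both graphs some universal adjacency matrix
  has entries [u, v in the same part] - 1/k; its columns are the centred indicator vectors of the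
  k parts, which sum to zero, so its rank is at most k - 1. Lower bound: the rows of the first and
  the columns of the second vertices of the parts form a k x k submatrix a I + g J with a = alpha
  (resp. -alpha) nonzero, and any k - 1 of its columns are linearly independent.\<close>

lemma univ_adj_mat_carrier: "univ_adj_mat N adj \<alpha> \<beta> \<gamma> \<delta> \<in> carrier_mat N N"
  by (simp add: univ_adj_mat_def adj_mat_def deg_mat_def all_ones_mat_def)

lemma univ_adj_mat_index:
  assumes "i < N" "j < N"
  shows "univ_adj_mat N adj \<alpha> \<beta> \<gamma> \<delta> $$ (i,j) =
    \<alpha> * (if adj i j then 1 else 0) + \<beta> * (if i = j then 1 else 0) + \<gamma>
    + \<delta> * (if i = j then real (degree N adj i) else 0)"
  using assms by (simp add: univ_adj_mat_def adj_mat_def deg_mat_def all_ones_mat_def)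

lemma mur_eqI:
  assumes attained: "\<alpha> \<noteq> 0" "vec_space.rank N (univ_adj_mat N adj \<alpha> \<beta> \<gamma> \<delta>) \<le> m"
    and lower: "\<And>\<alpha> \<beta> \<gamma> \<delta>. \<alpha> \<noteq> 0 \<Longrightarrow> m \<le> vec_space.rank N (univ_adj_mat N adj \<alpha> \<beta> \<gamma> \<delta>)"
  shows "mur N adj = m"
proof -
  let ?S = "{vec_space.rank N (univ_adj_mat N adj \<alpha> \<beta> \<gamma> \<delta>) | \<alpha> \<beta> \<gamma> \<delta>. \<alpha> \<noteq> 0}"
  have "?S \<subseteq> {..N}"
    using vec_space.rank_le_nc[OF univ_adj_mat_carrier] by auto
  then have "finite ?S" by (rule finite_subset) simp
  moreover have "m \<in> ?S"
    using attained lower[OF attained(1), of \<beta> \<gamma> \<delta>] le_antisym by blast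
  ultimately show ?thesis
    unfolding mur_def by (intro Min_eqI) (use lower in auto)
qed

definition block_start :: "nat list \<Rightarrow> nat \<Rightarrow> nat" where
  "block_start ns p = sum_list (take p ns)"

lemma sum_list_take_mono: "i \<le> j \<Longrightarrow> sum_list (take i (ns :: nat list)) \<le> sum_list (take j ns)"
  by (metis le_add1 le_add_diff_inverse sum_list_append take_add)

lemma part_of_eqI:
  assumes "block_start ns p \<le> v" "v < block_start ns (Suc p)"
  shows "part_of ns v = p"
  unfolding part_of_def
proof (rule Least_equality)
  show "v < sum_list (take (Suc p) ns)"
    using assms(2) by (simp add: block_start_def)
  fix q assume q: "v < sum_list (take (Suc q) ns)"
  show "p \<le> q"
  proof (rule ccontr)
    assume "\<not> p \<le> q"
    then have "sum_list (take (Suc q) ns) \<le> block_start ns p"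
      unfolding block_start_def by (intro sum_list_take_mono) simp
    then show False using q assms(1) by simp
  qed
qed

lemma part_of_less_length:
  assumes "v < sum_list ns"
  shows "part_of ns v < length ns"
proof -
  have "v < sum_list (take (Suc (length ns - 1)) ns)"
    using assms by simp
  then have "part_of ns v \<le> length ns - 1"
    unfolding part_of_def by (rule Least_le)
  moreover have "length ns > 0" using assms by (cases ns) auto
  ultimately show ?thesis by linarith
qed

lemma part_of_block_start_add:
  assumes "p < length ns" "i < ns ! p"
  shows "part_of ns (block_start ns p + i) = p" and "block_start ns p + i < sum_list ns"
proof -
  have next_block: "block_start ns (Suc p) = block_start ns p + ns ! p"
    using assms(1) by (simp add: block_start_def take_Suc_conv_app_nth)
  with assms(2) show "part_of ns (block_start ns p + i) = p"
    by (intro part_of_eqI) auto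
  have "block_start ns (Suc p) \<le> sum_list ns"
    using sum_list_take_mono[of "Suc p" "length ns" ns] assms(1) by (simp add: block_start_def)
  with next_block assms(2) show "block_start ns p + i < sum_list ns" by simp
qed

lemma part_of_image:
  assumes "0 \<notin> set ns"
  shows "part_of ns ` {..<sum_list ns} = {..<length ns}"
proof
  show "part_of ns ` {..<sum_list ns} \<subseteq> {..<length ns}"
    using part_of_less_length by auto
  show "{..<length ns} \<subseteq> part_of ns ` {..<sum_list ns}"
  proof
    fix p assume p: "p \<in> {..<length ns}"
    then have "0 < ns ! p" using assms by (metis gr0I lessThan_iff nth_mem)
    with p part_of_block_start_add[of p ns 0] show "p \<in> part_of ns ` {..<sum_list ns}"
      by (metis add_0_right imageI lessThan_iff)
  qed
qed

lemma block_start_Suc_in_block: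
  assumes "p < length ns" "1 < ns ! p"
  shows "part_of ns (block_start ns p) = p" "part_of ns (Suc (block_start ns p)) = p"
    and "Suc (block_start ns p) < sum_list ns"
  using part_of_block_start_add[of p ns 0] part_of_block_start_add[of p ns 1] assms by auto

lemma part_of_block_start_Suc_eq_iff:
  assumes "\<forall>n\<in>set ns. n > 1" "p < length ns" "q < length ns"
  shows "block_start ns p \<noteq> Suc (block_start ns q)"
    and "part_of ns (block_start ns p) = part_of ns (Suc (block_start ns q)) \<longleftrightarrow> p = q"
proof -
  have "part_of ns (block_start ns p) = p" "part_of ns (Suc (block_start ns q)) = q"
    using block_start_Suc_in_block assms by auto
  then show "part_of ns (block_start ns p) = part_of ns (Suc (block_start ns q)) \<longleftrightarrow> p = q"
    by simp
  then show "block_start ns p \<noteq> Suc (block_start ns q)"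
    by (cases "p = q") auto
qed

lemma (in vec_space) rank_le_card_span:
  assumes A: "A \<in> carrier_mat n nc" and W: "W \<subseteq> carrier_vec n" "finite W"
    and cols: "set (cols A) \<subseteq> span W"
  shows "rank A \<le> card W"
proof -
  have vs: "vectorspace class_ring (vs (span W))"
    using span_is_subspace[THEN subspace_is_vs, OF W(1)] by auto
  have sm: "submodule class_ring (span W) V"
    using W(1) by (simp add: span_is_submodule)
  have sub: "subspace class_ring (span (set (cols A))) (vs (span W))"
    using vectorspace.span_is_subspace[OF vs, of "set (cols A)",
        unfolded span_li_not_depend(1)[OF cols sm]] cols by auto
  have fin_dim: "vectorspace.fin_dim class_ring (vs (span W))"
    "vectorspace.fin_dim class_ring (vs (span W)\<lparr>carrier := span (set (cols A))\<rparr>)"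
    using fin_dim_span fin_dim_span_cols A W by auto
  have "vectorspace.dim class_ring (vs (span W)) \<le> card W"
  proof (rule vectorspace.gen_ge_dim[OF vs W(2)])
    show "W \<subseteq> carrier (vs (span W))" using W(1) in_own_span by auto
    show "LinearCombinations.module.gen_set class_ring (vs (span W)) W"
      using span_li_not_depend(1)[OF _ sm, of W] W(1) in_own_span by auto
  qed
  then show ?thesis
    unfolding rank_def using vectorspace.subspace_dim[OF vs sub fin_dim] by simp
qed

lemma rank_centred_class_indicator_le:
  fixes M :: "real mat" and f :: "nat \<Rightarrow> nat"
  assumes M: "M \<in> carrier_mat N N" and k: "k \<ge> 1" and f: "f ` {..<N} = {..<k}"
    and entries: "\<forall>i<N. \<forall>j<N. M $$ (i,j) = (if f i = f j then 1 else 0) - 1 / real k"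
  shows "vec_space.rank N M \<le> k - 1"
proof -
  interpret V: vec_space "TYPE(real)" N .
  define w where "w q = vec N (\<lambda>i. (if f i = q then 1 else 0) - 1 / real k)" for q
  define W where "W = w ` {..<k-1}"
  have W: "W \<subseteq> carrier_vec N" "finite W"
    unfolding W_def w_def by auto
  have inj: "inj_on w {..<k-1}"
  proof (rule inj_onI)
    fix q q' assume q: "q \<in> {..<k-1}" and eq: "w q = w q'"
    have "q \<in> f ` {..<N}" using f q by auto
    then obtain i where i: "i < N" "f i = q" by auto
    have "w q $ i = w q' $ i" using eq by simp
    then show "q = q'" using i by (auto simp: w_def split: if_splits)
  qed
  have col_M: "col M j = w (f j)" if "j < N" for j
    by (rule eq_vecI) (use M that entries in \<open>auto simp: w_def\<close>)
  have last_w: "V.lincomb (\<lambda>_. -1) W = w (k - 1)"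
  proof (rule eq_vecI)
    show "dim_vec (V.lincomb (\<lambda>_. -1) W) = dim_vec (w (k - 1))"
      using V.lincomb_dim[OF W(2,1)] by (simp add: w_def)
    fix i assume "i < dim_vec (w (k - 1))"
    then have i: "i < N" by (simp add: w_def)
    have "f i < k" using f i by auto
    have "V.lincomb (\<lambda>_. -1) W $ i = (\<Sum>u\<in>W. - 1 * u $ i)"
      by (rule V.lincomb_index[OF i W(1)])
    also have "\<dots> = (\<Sum>q<k-1. - ((if f i = q then 1 else 0) - 1 / real k))"
      unfolding W_def by (subst sum.reindex[OF inj]) (use i in \<open>simp add: w_def\<close>)
    also have "\<dots> = (real k - 1) / real k - (if f i < k - 1 then 1 else 0)"
      using k by (simp add: sum_negf sum_subtractf sum.delta' of_nat_diff)
    also have "\<dots> = w (k - 1) $ i"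
      using i k \<open>f i < k\<close> by (auto simp: w_def field_simps)
    finally show "V.lincomb (\<lambda>_. -1) W $ i = w (k - 1) $ i" .
  qed
  have "set (cols M) \<subseteq> V.span W"
  proof
    fix v assume "v \<in> set (cols M)"
    then obtain j where j: "j < N" "v = w (f j)"
      using M col_M by (auto simp: cols_def)
    show "v \<in> V.span W"
    proof (cases "f j < k - 1")
      case True
      then show ?thesis using j V.in_own_span[OF W(1)] by (auto simp: W_def)
    next
      case False
      moreover have "f j < k" using f j(1) by auto
      ultimately have "f j = k - 1" by linarith
      then have "v = V.lincomb (\<lambda>_. -1) W" using j(2) last_w by simp
      then show ?thesis unfolding V.span_def using W(2) by auto
    qed
  qed
  then have "vec_space.rank N M \<le> card W"
    using V.rank_le_card_span[OF M W] by simp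
  also have "card W = k - 1"
    unfolding W_def using card_image[OF inj] by simp
  finally show ?thesis .
qed

text \<open>Row m has no diagonal entry, so it shows that g times the sum of the d q vanishes; then
  row p < m gives d p * c = 0.\<close>
lemma diag_plus_const_kernel_trivial:
  fixes d :: "nat \<Rightarrow> 'a :: field"
  assumes c: "c \<noteq> 0"
    and rows: "\<And>p. p \<le> m \<Longrightarrow> (\<Sum>q<m. d q * ((if p = q then c else 0) + g)) = 0"
    and q: "q < m"
  shows "d q = 0"
proof -
  have row_expand: "(\<Sum>q<m. d q * ((if p = q then c else 0) + g))
      = (if p < m then d p * c else 0) + g * (\<Sum>q<m. d q)" for p
  proof -
    have "(\<Sum>q<m. d q * ((if p = q then c else 0) + g))
        = (\<Sum>q<m. (if p = q then d q * c else 0) + g * d q)"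
      by (rule sum.cong) (auto simp: algebra_simps)
    also have "\<dots> = (if p < m then d p * c else 0) + g * (\<Sum>q<m. d q)"
      by (simp add: sum.distrib sum_distrib_left sum.delta)
    finally show ?thesis .
  qed
  have "g * (\<Sum>q<m. d q) = 0"
    using rows[of m] row_expand[of m] by simp
  moreover have "d q * c + g * (\<Sum>q<m. d q) = 0"
    using rows[of q] row_expand[of q] q by simp
  ultimately have "d q * c = 0" by (metis add.right_neutral)
  with c show ?thesis by simp
qed

lemma (in vec_space) rank_ge_diag_plus_const_submatrix:
  assumes M: "M \<in> carrier_mat n nc" and c: "c \<noteq> 0"
    and rows: "\<And>p. p \<le> m \<Longrightarrow> r p < n" and cols: "\<And>q. q < m \<Longrightarrow> s q < nc"
    and entries: "\<And>p q. p \<le> m \<Longrightarrow> q < m \<Longrightarrow> M $$ (r p, s q) = (if p = q then c else 0) + g"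
  shows "m \<le> rank M"
proof -
  define U where "U = (\<lambda>q. col M (s q)) ` {..<m}"
  have inj: "inj_on (\<lambda>q. col M (s q)) {..<m}"
  proof (rule inj_onI, rule ccontr)
    fix q q' assume q: "q \<in> {..<m}" "q' \<in> {..<m}" and "col M (s q) = col M (s q')" "q \<noteq> q'"
    then have "M $$ (r q, s q) = M $$ (r q, s q')"
      by (metis M carrier_matD index_col rows cols lessThan_iff less_imp_le)
    with q \<open>q \<noteq> q'\<close> c show False by (simp add: entries)
  qed
  have U_cols: "U \<subseteq> set (cols M)"
    unfolding U_def using M cols by (auto simp: cols_def)
  then have U: "U \<subseteq> carrier_vec n"
    using M cols_dim by blast
  have "lin_indpt U"
  proof
    assume "lin_dep U"
    then obtain a u where a: "lincomb a U = 0\<^sub>v n" "u \<in> U" "a u \<noteq> 0"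
      using finite_lin_dep[of U] U unfolding U_def by blast
    define d where "d q = a (col M (s q))" for q
    have "(\<Sum>q<m. d q * ((if p = q then c else 0) + g)) = 0" if p: "p \<le> m" for p
    proof -
      have "(\<Sum>q<m. d q * ((if p = q then c else 0) + g)) = (\<Sum>q<m. d q * col M (s q) $ r p)"
        by (rule sum.cong) (use M p rows cols entries in auto)
      also have "\<dots> = (\<Sum>v\<in>U. a v * v $ r p)"
        unfolding U_def d_def by (simp add: sum.reindex[OF inj])
      also have "\<dots> = lincomb a U $ r p"
        using lincomb_index[OF rows[OF p] U] by simp
      finally show ?thesis using a(1) rows[OF p] by simp
    qed
    then have "d q = 0" if "q < m" for q
      using diag_plus_const_kernel_trivial[OF c _ that] by blast
    moreover obtain q where "q < m" "u = col M (s q)"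
      using a(2) unfolding U_def by auto
    ultimately show False using a(3) d_def by simp
  qed
  then have "card U \<le> rank M"
    using rank_ge_card_indpt[OF M U_cols] by simp
  then show ?thesis
    unfolding U_def using card_image[OF inj] by simp
qed

text \<open>The first and second vertices of the blocks are pairwise distinct, so neither the identity
  nor the degree term enters this submatrix.\<close>
lemma rank_univ_adj_mat_ge_parts:
  assumes k: "length ns \<ge> 1" and sizes: "\<forall>n\<in>set ns. n > 1" and c: "c \<noteq> 0"
    and pattern: "\<And>p q. p < length ns \<Longrightarrow> q < length ns \<Longrightarrow>
      \<alpha> * (if adj (block_start ns p) (Suc (block_start ns q)) then 1 else 0) = (if p = q then c else 0) + g"
  shows "length ns - 1 \<le> vec_space.rank (sum_list ns) (univ_adj_mat (sum_list ns) adj \<alpha> \<beta> \<gamma> \<delta>)"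
proof (rule vec_space.rank_ge_diag_plus_const_submatrix[OF univ_adj_mat_carrier c,
      where r = "block_start ns" and s = "\<lambda>q. Suc (block_start ns q)" and g = "g + \<gamma>"])
  have in_range: "block_start ns p < sum_list ns" "Suc (block_start ns p) < sum_list ns"
    if "p < length ns" for p
    using block_start_Suc_in_block(3)[of p ns] sizes that by auto
  show "block_start ns p < sum_list ns" if "p \<le> length ns - 1" for p
    using in_range that k by simp
  show "Suc (block_start ns q) < sum_list ns" if "q < length ns - 1" for q
    using in_range that by simp
  show "univ_adj_mat (sum_list ns) adj \<alpha> \<beta> \<gamma> \<delta> $$ (block_start ns p, Suc (block_start ns q))
      = (if p = q then c else 0) + (g + \<gamma>)" if "p \<le> length ns - 1" "q < length ns - 1" for p q
  proof -
    have "p < length ns" "q < length ns" using that k by auto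
    then show ?thesis
      using pattern[of p q] part_of_block_start_Suc_eq_iff(1)[OF sizes, of p q] in_range
      by (simp add: univ_adj_mat_index)
  qed
qed

lemma mur_union_complete:
  assumes "length ns \<ge> 1" and sizes: "\<forall>n\<in>set ns. n > 1"
  shows "mur (sum_list ns) (union_complete ns) = length ns - 1"
proof (rule mur_eqI)
  have "0 \<notin> set ns" using sizes by auto
  then show "vec_space.rank (sum_list ns)
      (univ_adj_mat (sum_list ns) (union_complete ns) 1 1 (- 1 / real (length ns)) 0) \<le> length ns - 1"
    using assms by (intro rank_centred_class_indicator_le[OF univ_adj_mat_carrier, where f = "part_of ns"])
      (auto simp: part_of_image univ_adj_mat_index union_complete_def)
  fix \<alpha> \<beta> \<gamma> \<delta> :: real assume "\<alpha> \<noteq> 0"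
  then show "length ns - 1 \<le> vec_space.rank (sum_list ns) (univ_adj_mat (sum_list ns) (union_complete ns) \<alpha> \<beta> \<gamma> \<delta>)"
    using assms by (intro rank_univ_adj_mat_ge_parts[where c = \<alpha> and g = 0])
      (auto simp: union_complete_def part_of_block_start_Suc_eq_iff)
qed simp

lemma mur_complete_multipartite:
  assumes "length ns \<ge> 1" and sizes: "\<forall>n\<in>set ns. n > 1"
  shows "mur (sum_list ns) (complete_multipartite ns) = length ns - 1"
proof (rule mur_eqI)
  have "0 \<notin> set ns" using sizes by auto
  then show "vec_space.rank (sum_list ns)
      (univ_adj_mat (sum_list ns) (complete_multipartite ns) (-1) 0 (1 - 1 / real (length ns)) 0) \<le> length ns - 1"
    using assms by (intro rank_centred_class_indicator_le[OF univ_adj_mat_carrier, where f = "part_of ns"])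
      (auto simp: part_of_image univ_adj_mat_index complete_multipartite_def)
  fix \<alpha> \<beta> \<gamma> \<delta> :: real assume "\<alpha> \<noteq> 0"
  then show "length ns - 1 \<le> vec_space.rank (sum_list ns) (univ_adj_mat (sum_list ns) (complete_multipartite ns) \<alpha> \<beta> \<gamma> \<delta>)"
    using assms by (intro rank_univ_adj_mat_ge_parts[where c = "- \<alpha>" and g = \<alpha>])
      (auto simp: complete_multipartite_def part_of_block_start_Suc_eq_iff)
qed simp

theorem theorem25:
  fixes ns :: "nat list"
  assumes "length ns \<ge> 1"
    and "\<forall>n \<in> set ns. n > 1"
  shows "mur (sum_list ns) (union_complete ns) = length ns - 1
       \<and> mur (sum_list ns) (complete_multipartite ns) = length ns - 1"
  using mur_union_complete[OF assms] mur_complete_multipartite[OF assms] by simp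

end
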